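(* Let $K>1$ and $\alpha_1,\dots,\alpha_K>0$, and let $p_0^{(k)} = \mathcal{N}(\mathbf{0}, \alpha_k \mathbf{I})$ on $\mathbb{R}^d$ for all $k \leq K$. Denote the Product of Experts (PoE) of these distributions by $p^{\mathrm{PoE}}_0 \coloneqq \mathrm{PoE}(p_0^{(1)}, \dots, p_0^{(K)})$. For any density $q_0$, write $q_t$ for the marginal distribution at time $t$ obtained by diffusing $q_0$ under the forward Variance Preserving SDE $\mathrm{d}\mathbf{z}_t = -\beta_t \mathbf{z}_t\,\mathrm{d}t + \sqrt{2\beta_t}\,\mathrm{d}\mathbf{w}_t$, $0\le t\le T$, $\mathbf{z}_0\sim q_0$ (so $p^{\mathrm{PoE}}_t$ is the diffusion of $p^{\mathrm{PoE}}_0$ and $p^{(k)}_t$ is the diffusion of $p^{(k)}_0$). Then, for any $t>0$, $p^{\mathrm{PoE}}_t \neq \mathrm{PoE}(p^{(1)}_t, \dots, p^{(K)}_t)$ unless $\alpha_1 = \dots = \alpha_K$.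
   Context: The Product of Experts of $K$ densities $p^{(1)},\dots,p^{(K)}$ on $\mathbb{R}^d$ is their normalized geometric mean: $\mathrm{PoE}(p^{(1)},\dots,p^{(K)})(\mathbf{x}) \coloneqq \sqrt[K]{p^{(1)}(\mathbf{x})\cdots p^{(K)}(\mathbf{x})}/Z_K$ with $Z_K = \int \sqrt[K]{p^{(1)}(\mathbf{x})\cdots p^{(K)}(\mathbf{x})}\,\mathrm{d}\mathbf{x}$. Its score is the arithmetic mean of the individual scores. Under the VP SDE above, the strong solution is $\mathbf{z}_t = \gamma_t \mathbf{z}_0 + \eta_t$ with deterministic $\gamma_t\in(0,1)$ and Gaussian noise $\eta_t$ independent of $\mathbf{z}_0$, so that if $\mathbf{z}_0\sim\mathcal{N}(\mathbf{0},\boldsymbol{\Sigma})$ then $\mathbf{z}_t\sim\mathcal{N}(\mathbf{0},\gamma_t\boldsymbol{\Sigma}+(1-\gamma_t)\mathbf{I})$. *)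

theory Defs
  imports "HOL-Analysis.Analysis"
begin

definition gauss_density :: "real ^ 'd \<Rightarrow> real \<Rightarrow> real ^ 'd \<Rightarrow> real" where
  "gauss_density mu v x =
     (2 * pi * v) powr (- real CARD('d) / 2) * exp (- (norm (x - mu))\<^sup>2 / (2 * v))"

definition PoE :: "nat \<Rightarrow> (nat \<Rightarrow> real ^ 'd \<Rightarrow> real) \<Rightarrow> real ^ 'd \<Rightarrow> real" where
  "PoE K p x =
     (\<Prod>k\<in>{1..K}. p k x) powr (1 / real K) /
     (\<integral>y. (\<Prod>k\<in>{1..K}. p k y) powr (1 / real K) \<partial>lborel)"

text \<open>Marginal density at time t of the forward VP SDE
  dz = -beta_t z dt + sqrt(2 beta_t) dw started from density q:
  z_t = m_t z_0 + eta_t with m_t = exp(-int_0^t beta) and eta_t ~ N(0, (1 - m_t^2) I)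
  independent of z_0.\<close>
definition vp_marginal :: "(real \<Rightarrow> real) \<Rightarrow> real \<Rightarrow> (real ^ 'd \<Rightarrow> real) \<Rightarrow> real ^ 'd \<Rightarrow> real" where
  "vp_marginal beta t q x =
     (let m = exp (- integral {0..t} beta)
      in \<integral>y. q y * gauss_density (m *\<^sub>R y) (1 - m\<^sup>2) x \<partial>lborel)"

end

theory Submission
  imports Defs "HOL-Probability.Distributions"
begin

(* Write the isotropic Gaussians as c exp(-s |x|^2) with rate s = 1/(2 alpha). The product of
   experts of such functions is again of this form, its rate being the arithmetic mean of the
   rates, and the VP transition kernel maps the rate s to diffused_rate m s, where
   m = exp(-int_0^t beta). So the two sides of the theorem have rates diffused_rate m (mean s_k)
   and mean (diffused_rate m s_k), which differ by strict concavity of diffused_rate m unless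
   all s_k agree. *)

lemma has_bochner_integral_exp_neg_sq:
  fixes s :: real
  assumes "s > 0"
  shows "has_bochner_integral lborel (\<lambda>y. exp (- s * y\<^sup>2)) (sqrt (pi / s))"
proof -
  have "(\<lambda>y. exp (- s * y\<^sup>2)) = (\<lambda>y. sqrt (pi / s) * normal_density 0 (sqrt (1 / (2 * s))) y)"
    using assms pi_gt_zero
    by (auto simp: fun_eq_iff normal_density_def real_sqrt_divide real_sqrt_mult field_simps)
  moreover have "has_bochner_integral lborel (normal_density 0 (sqrt (1 / (2 * s)))) 1"
    using assms by (simp add: has_bochner_integral_iff integrable_normal_density integral_normal_density)
  ultimately show ?thesis
    using has_bochner_integral_mult_right[of "sqrt (pi / s)" lborel] by fastforce
qed

lemma has_bochner_integral_exp_neg_norm_sq: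
  fixes s :: real
  assumes s: "s > 0"
  shows "has_bochner_integral lborel (\<lambda>x::'a::euclidean_space. exp (- s * (norm x)\<^sup>2))
           (sqrt (pi / s) ^ DIM('a))"
proof (rule has_bochner_integral_nn_integral)
  have line: "(\<integral>\<^sup>+y. ennreal (exp (- s * y\<^sup>2)) \<partial>lborel) = ennreal (sqrt (pi / s))"
    using has_bochner_integral_exp_neg_sq[OF s]
    by (subst nn_integral_eq_integral) (auto simp: has_bochner_integral_iff)
  have norm_sq: "(norm x)\<^sup>2 = (\<Sum>b\<in>Basis. (x \<bullet> b)\<^sup>2)" for x :: 'a
    by (subst power2_norm_eq_inner, subst euclidean_inner) (simp add: power2_eq_square)
  have "(\<integral>\<^sup>+x. ennreal (exp (- s * (norm (x::'a))\<^sup>2)) \<partial>lborel)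
      = (\<integral>\<^sup>+x. ennreal (\<Prod>b\<in>Basis. exp (- s * ((x::'a) \<bullet> b)\<^sup>2)) \<partial>lborel)"
    by (simp add: norm_sq sum_distrib_left exp_sum)
  also have "\<dots> = (\<integral>\<^sup>+x. (\<Prod>b\<in>Basis. ennreal (exp (- s * ((x::'a) \<bullet> b)\<^sup>2))) \<partial>lborel)"
    by (simp add: prod_ennreal)
  also have "\<dots> = (\<Prod>b\<in>(Basis::'a set). \<integral>\<^sup>+y. ennreal (exp (- s * y\<^sup>2)) \<partial>lborel)"
    by (rule nn_integral_lborel_prod) auto
  also have "\<dots> = ennreal (sqrt (pi / s) ^ DIM('a))"
    unfolding line prod_constant by (rule ennreal_power) (use s in simp)
  finally show "(\<integral>\<^sup>+x. ennreal (exp (- s * (norm (x::'a))\<^sup>2)) \<partial>lborel)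
      = ennreal (sqrt (pi / s) ^ DIM('a))" .
qed (use s in auto)

lemma lborel_integral_translate:
  fixes w :: "'a::euclidean_space" and f :: "'a \<Rightarrow> 'b::{banach,second_countable_topology}"
  assumes [measurable]: "f \<in> borel_measurable borel"
  shows "(\<integral>y. f (y - w) \<partial>lborel) = (\<integral>y. f y \<partial>lborel)"
proof -
  have "(\<integral>y. f y \<partial>lborel) = (\<integral>y. f y \<partial>distr lborel borel ((+) (- w)))"
    by (simp add: lborel_distr_plus)
  also have "\<dots> = (\<integral>y. f (- w + y) \<partial>lborel)"
    by (rule integral_distr) auto
  finally show ?thesis by simp
qed

lemma norm_sq_complete_square:
  fixes x y :: "'a::real_inner"
  assumes "v \<noteq> 0" and D: "D = 2 * v * s + m\<^sup>2" "D \<noteq> 0"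
  shows "s * (norm y)\<^sup>2 + (norm (x - m *\<^sub>R y))\<^sup>2 / (2 * v)
       = s / D * (norm x)\<^sup>2 + D / (2 * v) * (norm (y - (m / D) *\<^sub>R x))\<^sup>2"
proof -
  have expand: "(norm (a - k *\<^sub>R b))\<^sup>2 = (norm a)\<^sup>2 - 2 * k * (a \<bullet> b) + k\<^sup>2 * (norm b)\<^sup>2"
    for a b :: 'a and k :: real
    unfolding power2_norm_eq_inner
    by (simp add: inner_diff_left inner_diff_right inner_commute algebra_simps power2_eq_square)
  have s: "s = (D - m\<^sup>2) / (2 * v)"
    using assms(1) D(1) by (simp add: field_simps)
  have "s * b + (a - 2 * m * p + m\<^sup>2 * b) / (2 * v)
      = s / D * a + D / (2 * v) * (b - 2 * (m / D) * p + (m / D)\<^sup>2 * a)" for a b p :: real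
    unfolding s using assms(1) D(2) by (simp add: field_simps power2_eq_square)
  then show ?thesis
    unfolding expand inner_commute[of y x] .
qed

lemma frac_affine_below_tangent:
  fixes a b x y :: real
  assumes "a > 0" "b > 0" "x > 0" "y > 0"
  shows "x / (a * x + b) \<le> y / (a * y + b) + b / (a * y + b)\<^sup>2 * (x - y)"
    and "x \<noteq> y \<Longrightarrow> x / (a * x + b) < y / (a * y + b) + b / (a * y + b)\<^sup>2 * (x - y)"
proof -
  define u U where "u = a * x + b" and "U = a * y + b"
  have pos: "u > 0" "U > 0"
    unfolding u_def U_def using assms by (simp_all add: add_pos_pos)
  have "y / U + b / U\<^sup>2 * (x - y) - x / u = (y * U * u + b * u * (x - y) - x * U\<^sup>2) / (u * U\<^sup>2)"
    using pos by (simp add: field_simps power2_eq_square)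
  also have "y * U * u + b * u * (x - y) - x * U\<^sup>2 = a * b * (x - y)\<^sup>2"
    unfolding u_def U_def by (simp add: algebra_simps power2_eq_square)
  finally have gap: "y / (a * y + b) + b / (a * y + b)\<^sup>2 * (x - y) - x / (a * x + b)
      = a * b * (x - y)\<^sup>2 / ((a * x + b) * (a * y + b)\<^sup>2)"
    unfolding u_def U_def .
  note pos = pos[unfolded u_def U_def]
  have "a * b * (x - y)\<^sup>2 / ((a * x + b) * (a * y + b)\<^sup>2) \<ge> 0"
    using pos assms(1,2) by simp
  then show "x / (a * x + b) \<le> y / (a * y + b) + b / (a * y + b)\<^sup>2 * (x - y)"
    using gap by simp
  assume "x \<noteq> y"
  then have "a * b * (x - y)\<^sup>2 / ((a * x + b) * (a * y + b)\<^sup>2) > 0"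
    using pos assms(1,2) by simp
  then show "x / (a * x + b) < y / (a * y + b) + b / (a * y + b)\<^sup>2 * (x - y)"
    using gap by simp
qed

lemma mean_frac_affine_less:
  fixes f :: "'i \<Rightarrow> real" and a b :: real
  assumes "finite A" "a > 0" "b > 0" "\<And>i. i \<in> A \<Longrightarrow> f i > 0"
    and "i \<in> A" "j \<in> A" "f i \<noteq> f j"
  defines "\<mu> \<equiv> (\<Sum>i\<in>A. f i) / card A"
  shows "(\<Sum>i\<in>A. f i / (a * f i + b)) / card A < \<mu> / (a * \<mu> + b)"
proof -
  have card: "card A > 0"
    using assms(1,5) card_gt_0_iff by blast
  have \<mu>: "\<mu> > 0"
    unfolding \<mu>_def using assms(1,4,5) card by (intro divide_pos_pos sum_pos) auto
  obtain k where "k \<in> A" "f k \<noteq> \<mu>"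
    using assms(5-7) by metis
  define slope where "slope = b / (a * \<mu> + b)\<^sup>2"
  define tangent where "tangent z = \<mu> / (a * \<mu> + b) + slope * (z - \<mu>)" for z
  have "(\<Sum>i\<in>A. f i / (a * f i + b)) < (\<Sum>i\<in>A. tangent (f i))"
  proof (rule sum_strict_mono_ex1)
    show "\<forall>i\<in>A. f i / (a * f i + b) \<le> tangent (f i)"
      unfolding tangent_def slope_def using frac_affine_below_tangent(1)[OF assms(2,3) _ \<mu>] assms(4) by blast
    show "\<exists>i\<in>A. f i / (a * f i + b) < tangent (f i)"
      unfolding tangent_def slope_def using frac_affine_below_tangent(2)[OF assms(2,3) _ \<mu>] assms(4)
        \<open>k \<in> A\<close> \<open>f k \<noteq> \<mu>\<close> by blast
  qed (rule assms(1))
  also have "(\<Sum>i\<in>A. tangent (f i))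
      = card A * (\<mu> / (a * \<mu> + b)) + slope * ((\<Sum>i\<in>A. f i) - card A * \<mu>)"
    unfolding tangent_def by (simp add: sum.distrib sum_distrib_left sum_subtractf algebra_simps)
  also have "(\<Sum>i\<in>A. f i) - card A * \<mu> = 0"
    unfolding \<mu>_def using card by simp
  finally show ?thesis
    using card by (simp add: divide_less_eq mult.commute)
qed

lemma integral_pos_if_continuous_pos:
  fixes f :: "real \<Rightarrow> real"
  assumes "continuous_on {a..b} f" "\<And>x. x \<in> {a..b} \<Longrightarrow> f x > 0" "a < b"
  shows "integral {a..b} f > 0"
proof -
  obtain x0 where x0: "x0 \<in> {a..b}" "\<And>y. y \<in> {a..b} \<Longrightarrow> f x0 \<le> f y"
    using continuous_attains_inf[OF compact_Icc _ assms(1)] assms(3) by auto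
  have "0 < (b - a) * f x0"
    using assms(2,3) x0(1) by simp
  also have "\<dots> = integral {a..b} (\<lambda>_. f x0)"
    using assms(3) by simp
  also have "\<dots> \<le> integral {a..b} f"
    using assms(1) x0(2) by (intro integral_le integrable_continuous_interval) auto
  finally show ?thesis .
qed

definition centered_gauss :: "real \<Rightarrow> real \<Rightarrow> 'a::real_normed_vector \<Rightarrow> real" where
  "centered_gauss c s x = c * exp (- s * (norm x)\<^sup>2)"

lemma borel_measurable_centered_gauss [measurable]:
  "centered_gauss c s \<in> borel_measurable borel"
  unfolding centered_gauss_def by measurable

lemma gauss_density_zero:
  "gauss_density (0::real ^ 'd) a = centered_gauss ((2 * pi * a) powr (- real CARD('d) / 2)) (1 / (2 * a))"
  by (simp add: fun_eq_iff gauss_density_def centered_gauss_def)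

lemma integral_centered_gauss:
  assumes "s > 0"
  shows "(\<integral>x. centered_gauss c s (x::'a::euclidean_space) \<partial>lborel) = c * sqrt (pi / s) ^ DIM('a)"
  unfolding centered_gauss_def
  using has_bochner_integral_integral_eq[OF has_bochner_integral_exp_neg_norm_sq[OF assms, where 'a='a]]
  by simp

lemma centered_gauss_eq_iff:
  assumes "c \<noteq> 0"
  shows "centered_gauss c s = (centered_gauss c' s' :: 'a::euclidean_space \<Rightarrow> real)
     \<longleftrightarrow> c = c' \<and> s = s'"
proof
  assume eq: "centered_gauss c s = (centered_gauss c' s' :: 'a \<Rightarrow> real)"
  have "c = c'"
    using fun_cong[OF eq, of 0] by (simp add: centered_gauss_def)
  moreover obtain b :: 'a where "b \<in> Basis"
    using nonempty_Basis by blast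
  then have "norm b = 1" by simp
  then have "exp (- s) = exp (- s')"
    using fun_cong[OF eq, of b] assms \<open>c = c'\<close> by (simp add: centered_gauss_def)
  ultimately show "c = c' \<and> s = s'" by simp
qed simp

lemma prod_centered_gauss:
  "(\<Prod>k\<in>A. centered_gauss (c k) (s k) x) = centered_gauss (\<Prod>k\<in>A. c k) (\<Sum>k\<in>A. s k) x"
  by (cases "finite A")
    (simp_all add: centered_gauss_def prod.distrib exp_sum[symmetric] sum_distrib_right sum_negf)

lemma centered_gauss_powr:
  assumes "c > 0"
  shows "centered_gauss c s x powr r = centered_gauss (c powr r) (r * s) x"
  using assms by (simp add: centered_gauss_def powr_mult exp_powr_real)

lemma PoE_cong:
  assumes "\<And>k. k \<in> {1..K} \<Longrightarrow> p k = q k"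
  shows "PoE K p = PoE K q"
proof -
  have prod_eq: "(\<Prod>k\<in>{1..K}. p k x) = (\<Prod>k\<in>{1..K}. q k x)" for x
    using assms by (intro prod.cong) auto
  show ?thesis
    unfolding PoE_def by (simp only: prod_eq)
qed

lemma PoE_centered_gauss:
  fixes c s :: "nat \<Rightarrow> real"
  assumes "K \<ge> 1" and c: "\<And>k. k \<in> {1..K} \<Longrightarrow> c k > 0" and s: "\<And>k. k \<in> {1..K} \<Longrightarrow> s k > 0"
  defines "\<sigma> \<equiv> (\<Sum>k\<in>{1..K}. s k) / real K"
  shows "PoE K (\<lambda>k. centered_gauss (c k) (s k))
       = (centered_gauss (1 / sqrt (pi / \<sigma>) ^ CARD('d)) \<sigma> :: real ^ 'd \<Rightarrow> real)"
proof
  fix x :: "real ^ 'd"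
  define P where "P = (\<Prod>k\<in>{1..K}. c k)"
  have P: "P > 0"
    unfolding P_def using c by (intro prod_pos) auto
  have \<sigma>: "\<sigma> > 0"
    unfolding \<sigma>_def using assms(1) s by (intro divide_pos_pos sum_pos) auto
  have geometric_mean: "(\<Prod>k\<in>{1..K}. centered_gauss (c k) (s k) y) powr (1 / real K)
      = centered_gauss (P powr (1 / real K)) \<sigma> y" for y :: "real ^ 'd"
    unfolding prod_centered_gauss P_def[symmetric] centered_gauss_powr[OF P] \<sigma>_def by simp
  show "PoE K (\<lambda>k. centered_gauss (c k) (s k)) x = centered_gauss (1 / sqrt (pi / \<sigma>) ^ CARD('d)) \<sigma> x"
    unfolding PoE_def geometric_mean integral_centered_gauss[OF \<sigma>]
    using P by (simp add: centered_gauss_def)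
qed

lemma centered_gauss_mult_gauss_density:
  fixes x y :: "real ^ 'd" and c s v m :: real
  assumes "s > 0" "v > 0"
  defines "D \<equiv> 2 * v * s + m\<^sup>2"
  shows "centered_gauss c s y * gauss_density (m *\<^sub>R y) v x
       = centered_gauss (c * (2 * pi * v) powr (- real CARD('d) / 2)) (s / D) x
         * centered_gauss 1 (D / (2 * v)) (y - (m / D) *\<^sub>R x)"
proof -
  have "D > 0"
    unfolding D_def using assms by (simp add: add_pos_nonneg)
  then have "- s * (norm y)\<^sup>2 + - (norm (x - m *\<^sub>R y))\<^sup>2 / (2 * v)
      = - (s / D) * (norm x)\<^sup>2 + - (D / (2 * v)) * (norm (y - (m / D) *\<^sub>R x))\<^sup>2"
    using norm_sq_complete_square[of v D s m y x] assms D_def by simp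
  then show ?thesis
    unfolding centered_gauss_def gauss_density_def
    by (simp add: exp_add[symmetric] mult_ac)
qed

lemma integral_centered_gauss_mult_gauss_density:
  assumes "c > 0" "s > 0" "v > 0"
  shows "\<exists>c'>0. (\<lambda>x. \<integral>y. centered_gauss c s y * gauss_density (m *\<^sub>R y) v x \<partial>lborel)
       = (centered_gauss c' (s / (2 * v * s + m\<^sup>2)) :: real ^ 'd \<Rightarrow> real)"
proof -
  define D where "D = 2 * v * s + m\<^sup>2"
  define C where "C = c * (2 * pi * v) powr (- real CARD('d) / 2)"
  have "D > 0"
    unfolding D_def using assms by (simp add: add_pos_nonneg)
  have "(\<integral>y. centered_gauss c s y * gauss_density (m *\<^sub>R y) v x \<partial>lborel)
      = centered_gauss (C * sqrt (pi / (D / (2 * v))) ^ CARD('d)) (s / D) x" for x :: "real ^ 'd"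
  proof -
    have "(\<integral>y. centered_gauss c s y * gauss_density (m *\<^sub>R y) v x \<partial>lborel)
        = centered_gauss C (s / D) x * (\<integral>y. centered_gauss 1 (D / (2 * v)) (y - (m / D) *\<^sub>R x) \<partial>lborel)"
      unfolding centered_gauss_mult_gauss_density[OF assms(2,3)] C_def D_def
      by (rule integral_mult_right_zero)
    also have "(\<integral>y. centered_gauss 1 (D / (2 * v)) (y - (m / D) *\<^sub>R x) \<partial>lborel)
        = (\<integral>y. centered_gauss 1 (D / (2 * v)) (y :: real ^ 'd) \<partial>lborel)"
      by (rule lborel_integral_translate) measurable
    also have "\<dots> = sqrt (pi / (D / (2 * v))) ^ CARD('d)"
      using \<open>D > 0\<close> assms(3) by (simp add: integral_centered_gauss)
    finally show ?thesis
      by (simp add: centered_gauss_def)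
  qed
  moreover have "C * sqrt (pi / (D / (2 * v))) ^ CARD('d) > 0"
    unfolding C_def using assms \<open>D > 0\<close> by simp
  ultimately show ?thesis
    unfolding D_def by blast
qed

(* Since z_t = m z_0 + N(0, (1 - m^2) I), the rate 1/(2a) of N(0, a I) becomes the rate of
   N(0, (m^2 a + 1 - m^2) I). *)
definition diffused_rate :: "real \<Rightarrow> real \<Rightarrow> real" where
  "diffused_rate m s = s / (2 * (1 - m\<^sup>2) * s + m\<^sup>2)"

lemma diffused_rate_pos:
  assumes "0 < m" "m < 1" "s > 0"
  shows "diffused_rate m s > 0"
proof -
  have "1 - m\<^sup>2 > 0"
    using assms(1,2) by (simp add: power_less_one_iff)
  then show ?thesis
    unfolding diffused_rate_def using assms by (intro divide_pos_pos add_pos_pos mult_pos_pos) auto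
qed

lemma mean_diffused_rate_less:
  assumes "0 < m" "m < 1" "finite A" "\<And>i. i \<in> A \<Longrightarrow> s i > 0"
    and "i \<in> A" "j \<in> A" "s i \<noteq> s j"
  shows "(\<Sum>i\<in>A. diffused_rate m (s i)) / card A < diffused_rate m ((\<Sum>i\<in>A. s i) / card A)"
proof -
  have "1 - m\<^sup>2 > 0"
    using assms(1,2) by (simp add: power_less_one_iff)
  then show ?thesis
    unfolding diffused_rate_def
    using mean_frac_affine_less[OF assms(3) _ _ assms(4-7), of "2 * (1 - m\<^sup>2)" "m\<^sup>2"] assms(1)
    by simp
qed

lemma vp_marginal_centered_gauss:
  assumes "integral {0..t} beta > 0" "c > 0" "s > 0"
  shows "\<exists>c'>0. vp_marginal beta t (centered_gauss c s)
       = (centered_gauss c' (diffused_rate (exp (- integral {0..t} beta)) s) :: real ^ 'd \<Rightarrow> real)"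
proof -
  define m where "m = exp (- integral {0..t} beta)"
  have "0 < m" "m < 1"
    unfolding m_def using assms(1) by simp_all
  then have "1 - m\<^sup>2 > 0"
    by (simp add: power_less_one_iff)
  then show ?thesis
    unfolding vp_marginal_def Let_def m_def[symmetric] diffused_rate_def
    using integral_centered_gauss_mult_gauss_density[OF assms(2,3)] by blast
qed

lemma vp_marginal_PoE_centered_gauss:
  assumes "integral {0..t} beta > 0" "K \<ge> 1"
    and c: "\<And>k. k \<in> {1..K} \<Longrightarrow> c k > 0" and s: "\<And>k. k \<in> {1..K} \<Longrightarrow> s k > 0"
  shows "\<exists>c'>0. vp_marginal beta t (PoE K (\<lambda>k. centered_gauss (c k) (s k)))
       = (centered_gauss c' (diffused_rate (exp (- integral {0..t} beta)) ((\<Sum>k\<in>{1..K}. s k) / K))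
          :: real ^ 'd \<Rightarrow> real)"
proof -
  define \<sigma> where "\<sigma> = (\<Sum>k\<in>{1..K}. s k) / K"
  have "\<sigma> > 0"
    unfolding \<sigma>_def using assms(2) s by (intro divide_pos_pos sum_pos) auto
  moreover have "PoE K (\<lambda>k. centered_gauss (c k) (s k))
      = (centered_gauss (1 / sqrt (pi / \<sigma>) ^ CARD('d)) \<sigma> :: real ^ 'd \<Rightarrow> real)"
    unfolding \<sigma>_def using assms(2) c s by (rule PoE_centered_gauss)
  ultimately show ?thesis
    unfolding \<sigma>_def[symmetric] by (simp add: vp_marginal_centered_gauss assms(1))
qed

lemma PoE_vp_marginal_centered_gauss:
  assumes "integral {0..t} beta > 0" "K \<ge> 1"
    and c: "\<And>k. k \<in> {1..K} \<Longrightarrow> c k > 0" and s: "\<And>k. k \<in> {1..K} \<Longrightarrow> s k > 0"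
  defines "m \<equiv> exp (- integral {0..t} beta)"
  shows "\<exists>c'>0. PoE K (\<lambda>k. vp_marginal beta t (centered_gauss (c k) (s k)))
       = (centered_gauss c' ((\<Sum>k\<in>{1..K}. diffused_rate m (s k)) / K) :: real ^ 'd \<Rightarrow> real)"
proof -
  have "\<forall>k\<in>{1..K}. \<exists>c'>0. vp_marginal beta t (centered_gauss (c k) (s k))
      = (centered_gauss c' (diffused_rate m (s k)) :: real ^ 'd \<Rightarrow> real)"
    unfolding m_def using vp_marginal_centered_gauss[OF assms(1) c s] by blast
  then obtain c' where c'_pos: "\<And>k. k \<in> {1..K} \<Longrightarrow> c' k > 0"
    and c'_eq: "\<And>k. k \<in> {1..K} \<Longrightarrow> vp_marginal beta t (centered_gauss (c k) (s k))
      = (centered_gauss (c' k) (diffused_rate m (s k)) :: real ^ 'd \<Rightarrow> real)"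
    by metis
  have "0 < m" "m < 1"
    unfolding m_def using assms(1) by simp_all
  then have rate_pos: "\<And>k. k \<in> {1..K} \<Longrightarrow> diffused_rate m (s k) > 0"
    using s by (simp add: diffused_rate_pos)
  define \<rho> where "\<rho> = (\<Sum>k\<in>{1..K}. diffused_rate m (s k)) / K"
  have "\<rho> > 0"
    unfolding \<rho>_def using assms(2) rate_pos by (intro divide_pos_pos sum_pos) auto
  have "PoE K (\<lambda>k. vp_marginal beta t (centered_gauss (c k) (s k)))
      = PoE K (\<lambda>k. centered_gauss (c' k) (diffused_rate m (s k)) :: real ^ 'd \<Rightarrow> real)"
    by (intro PoE_cong c'_eq)
  also have "\<dots> = centered_gauss (1 / sqrt (pi / \<rho>) ^ CARD('d)) \<rho>"
    unfolding \<rho>_def using assms(2) c'_pos rate_pos by (rule PoE_centered_gauss)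
  finally show ?thesis
    using \<open>\<rho> > 0\<close> unfolding \<rho>_def[symmetric] by (intro exI[of _ "1 / sqrt (pi / \<rho>) ^ CARD('d)"]) simp
qed

lemma diffused_rate_mean_eq_if_vp_marginal_PoE_commute:
  assumes "integral {0..t} beta > 0" "K \<ge> 1"
    and c: "\<And>k. k \<in> {1..K} \<Longrightarrow> c k > 0" and s: "\<And>k. k \<in> {1..K} \<Longrightarrow> s k > 0"
    and commute: "vp_marginal beta t (PoE K (\<lambda>k. centered_gauss (c k) (s k)))
      = (PoE K (\<lambda>k. vp_marginal beta t (centered_gauss (c k) (s k))) :: real ^ 'd \<Rightarrow> real)"
  defines "m \<equiv> exp (- integral {0..t} beta)"
  shows "diffused_rate m ((\<Sum>k\<in>{1..K}. s k) / K) = (\<Sum>k\<in>{1..K}. diffused_rate m (s k)) / K"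
proof -
  obtain cL where "cL > 0" and lhs: "vp_marginal beta t (PoE K (\<lambda>k. centered_gauss (c k) (s k)))
      = (centered_gauss cL (diffused_rate m ((\<Sum>k\<in>{1..K}. s k) / K)) :: real ^ 'd \<Rightarrow> real)"
    using vp_marginal_PoE_centered_gauss[OF assms(1,2), of c s] c s unfolding m_def by blast
  obtain cR where rhs: "PoE K (\<lambda>k. vp_marginal beta t (centered_gauss (c k) (s k)))
      = (centered_gauss cR ((\<Sum>k\<in>{1..K}. diffused_rate m (s k)) / K) :: real ^ 'd \<Rightarrow> real)"
    using PoE_vp_marginal_centered_gauss[OF assms(1,2), of c s] c s unfolding m_def by blast
  have "cL \<noteq> 0"
    using \<open>cL > 0\<close> by simp
  then show ?thesis
    using commute unfolding lhs rhs centered_gauss_eq_iff[OF \<open>cL \<noteq> 0\<close>] by blast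
qed

theorem proposition2:
  fixes K :: nat and alpha :: "nat \<Rightarrow> real" and beta :: "real \<Rightarrow> real"
    and T t :: real
  assumes "K > 1"
    and "\<forall>k\<in>{1..K}. alpha k > 0"
    and "continuous_on {0..T} beta" and "\<forall>s\<in>{0..T}. beta s > 0"
    and "0 < t" and "t \<le> T"
    and "\<not> (\<forall>i\<in>{1..K}. \<forall>j\<in>{1..K}. alpha i = alpha j)"
  shows "vp_marginal beta t
           (PoE K (\<lambda>k. gauss_density (0 :: real ^ 'd) (alpha k)))
         \<noteq> PoE K (\<lambda>k. vp_marginal beta t (gauss_density (0 :: real ^ 'd) (alpha k)))"
proof
  define m where "m = exp (- integral {0..t} beta)"
  define s where "s k = 1 / (2 * alpha k)" for k
  define c where "c k = (2 * pi * alpha k) powr (- real CARD('d) / 2)" for k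
  have beta: "integral {0..t} beta > 0"
    using assms(3-6) by (intro integral_pos_if_continuous_pos) (auto elim: continuous_on_subset)
  have s: "s k > 0" and c: "c k > 0" if "k \<in> {1..K}" for k
    using bspec[OF assms(2) that] by (simp_all add: s_def c_def)
  have prior: "gauss_density (0 :: real ^ 'd) (alpha k) = centered_gauss (c k) (s k)" for k
    unfolding c_def s_def by (rule gauss_density_zero)
  assume "vp_marginal beta t (PoE K (\<lambda>k. gauss_density (0 :: real ^ 'd) (alpha k)))
    = PoE K (\<lambda>k. vp_marginal beta t (gauss_density (0 :: real ^ 'd) (alpha k)))"
  then have "diffused_rate m ((\<Sum>k\<in>{1..K}. s k) / K) = (\<Sum>k\<in>{1..K}. diffused_rate m (s k)) / K"
    unfolding prior m_def using beta assms(1) c s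
    by (intro diffused_rate_mean_eq_if_vp_marginal_PoE_commute) auto
  moreover obtain i j where "i \<in> {1..K}" "j \<in> {1..K}" "alpha i \<noteq> alpha j"
    using assms(7) by blast
  then have "(\<Sum>k\<in>{1..K}. diffused_rate m (s k)) / K < diffused_rate m ((\<Sum>k\<in>{1..K}. s k) / K)"
    using mean_diffused_rate_less[of m "{1..K}" s i j] s beta by (simp add: m_def s_def)
  ultimately show False
    by simp
qed

end
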